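(* Let $\mathcal{X}$ be a set, $p\ge2$, $\Theta$ a parameter set, and for each $\theta\in\Theta$ let $s^\theta:\mathcal{X}\to\mathbb{R}^p$ be a score map with predictor $h_\theta$ and pairwise reduction $g_\theta$. Let $\mathcal{H}_\Theta=\{h_\theta:\theta\in\Theta\}$ and $\mathcal{G}_\Theta=\{g_\theta:\theta\in\Theta\}$. If a set $S=\{x^{(1)},\dots,x^{(n)}\}\subseteq\mathcal{X}$ of $n$ distinct points is Natarajan-shattered by $\mathcal{H}_\Theta$, then \[ 2^n\ \le\ \Pi_{\mathcal{G}_\Theta}\big(n\,p(p-1)/2\big). \]
   Context: Labels are $[p]=\{1,\dots,p\}$. The predictor is $h_\theta(x)=\ell$ if $s^\theta_\ell(x)>s^\theta_k(x)$ for all $k\ne\ell$, and $h_\theta(x)=\bot$ otherwise ($\bot\notin[p]$). The pairwise reduction is defined on $\mathcal{Z}_{\mathrm{pair}}=\mathcal{X}\times\{(i,j)\in[p]^2:i<j\}$ by $g_\theta(x,i,j)=+1$ if $s^\theta_i(x)\ge s^\theta_j(x)$ and $-1$ otherwise. A finite $S\subseteq\mathcal{X}$ is Natarajan-shattered by a class $\mathcal{H}$ of functions $\mathcal{X}\to[p]\cup\{\bot\}$ if there exist $f_1,f_2:S\to[p]$ with $f_1(x)\ne f_2(x)$ for all $x\in S$ such that for every $b\in\{1,2\}^S$ some $h\in\mathcal{H}$ satisfies $h(x)=f_{b(x)}(x)$ for all $x\in S$. For a class $\mathcal{B}\subseteq\{-1,+1\}^{\mathcal{Z}}$, the growth function is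 $\Pi_{\mathcal{B}}(N)=\max\{|\{b|_T:b\in\mathcal{B}\}|:\ T\subseteq\mathcal{Z},|T|=N\}$. *)

theory Defs
  imports Complex_Main "HOL-Library.FuncSet"
begin

text \<open>Labels are {1..p}; the abstention symbol is None. A score map for parameter t is
  s t :: 'x => nat => real, where s t x l is the l-th score (only l in {1..p} matters).\<close>

definition predictor :: "nat \<Rightarrow> ('t \<Rightarrow> 'x \<Rightarrow> nat \<Rightarrow> real) \<Rightarrow> 't \<Rightarrow> 'x \<Rightarrow> nat option" where
  "predictor p s t x =
     (if \<exists>l\<in>{1..p}. \<forall>k\<in>{1..p}. k \<noteq> l \<longrightarrow> s t x l > s t x k
      then Some (THE l. l \<in> {1..p} \<and> (\<forall>k\<in>{1..p}. k \<noteq> l \<longrightarrow> s t x l > s t x k))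
      else None)"

definition pair_domain :: "'x set \<Rightarrow> nat \<Rightarrow> ('x \<times> nat \<times> nat) set" where
  "pair_domain X p = X \<times> {(i, j). 1 \<le> i \<and> i < j \<and> j \<le> p}"

definition pair_reduction :: "('t \<Rightarrow> 'x \<Rightarrow> nat \<Rightarrow> real) \<Rightarrow> 't \<Rightarrow> 'x \<times> nat \<times> nat \<Rightarrow> int" where
  "pair_reduction s t z = (case z of (x, i, j) \<Rightarrow> if s t x i \<ge> s t x j then 1 else -1)"

definition natarajan_shattered :: "nat \<Rightarrow> ('x \<Rightarrow> nat option) set \<Rightarrow> 'x set \<Rightarrow> bool" where
  "natarajan_shattered p H S \<longleftrightarrow> finite S \<and>
     (\<exists>f1 f2. (\<forall>x\<in>S. f1 x \<in> {1..p} \<and> f2 x \<in> {1..p} \<and> f1 x \<noteq> f2 x) \<and>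
        (\<forall>b. (\<forall>x\<in>S. b x \<in> {1::nat, 2}) \<longrightarrow>
           (\<exists>h\<in>H. \<forall>x\<in>S. h x = Some (if b x = 1 then f1 x else f2 x))))"

definition growth :: "'z set \<Rightarrow> ('z \<Rightarrow> int) set \<Rightarrow> nat \<Rightarrow> nat" where
  "growth Z B N = Max {card ((\<lambda>b. restrict b T) ` B) | T. T \<subseteq> Z \<and> finite T \<and> card T = N}"

end

theory Submission
  imports Defs
begin

text \<open>For each choice pattern b on S the shattering hypothesis yields a parameter whose
  predictor outputs f1 x or f2 x on every x of S, as dictated by b. If two patterns differ
  at x, the two predictors have different strict winners l, l' at x, so their pairwise
  reductions disagree at the point (x, min l l', max l l') of S \<times> pairs. Hence restricting
  the pairwise reductions to the n p (p - 1) / 2 points of S \<times> pairs already produces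
  2^n distinct patterns.\<close>

lemma predictor_eq_SomeD:
  assumes "predictor p s t x = Some l"
  shows "l \<in> {1..p}" and "\<And>k. k \<in> {1..p} \<Longrightarrow> k \<noteq> l \<Longrightarrow> s t x k < s t x l"
proof -
  let ?winner = "\<lambda>l. l \<in> {1..p} \<and> (\<forall>k\<in>{1..p}. k \<noteq> l \<longrightarrow> s t x l > s t x k)"
  have "\<exists>l. ?winner l"
    using assms by (auto simp: predictor_def split: if_splits)
  moreover have "m = m'" if "?winner m" "?winner m'" for m m'
    using that less_asym by blast
  ultimately have "\<exists>!l. ?winner l" by blast
  moreover have "l = (THE l. ?winner l)"
    using assms by (auto simp: predictor_def split: if_splits)
  ultimately have "?winner l" using theI' by simp
  then show "l \<in> {1..p}" and "\<And>k. k \<in> {1..p} \<Longrightarrow> k \<noteq> l \<Longrightarrow> s t x k < s t x l"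
    by auto
qed

definition label_pairs :: "nat \<Rightarrow> (nat \<times> nat) set" where
  "label_pairs p = {(i, j). 1 \<le> i \<and> i < j \<and> j \<le> p}"

lemma pair_domain_eq: "pair_domain X p = X \<times> label_pairs p"
  unfolding pair_domain_def label_pairs_def ..

lemma finite_label_pairs: "finite (label_pairs p)"
  by (rule finite_subset[of _ "{1..p} \<times> {1..p}"]) (auto simp: label_pairs_def)

lemma card_label_pairs: "2 * card (label_pairs p) = p * (p - 1)"
proof (induction p)
  case 0
  have "label_pairs 0 = {}" by (auto simp: label_pairs_def)
  then show ?case by simp
next
  case (Suc p)
  have "label_pairs (Suc p) = label_pairs p \<union> (\<lambda>i. (i, Suc p)) ` {1..p}"
    and "label_pairs p \<inter> (\<lambda>i. (i, Suc p)) ` {1..p} = {}"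
    by (auto simp: label_pairs_def)
  moreover have "card ((\<lambda>i. (i, Suc p)) ` {1..p}) = p"
    by (simp add: card_image inj_on_def)
  ultimately have "card (label_pairs (Suc p)) = card (label_pairs p) + p"
    by (simp add: card_Un_disjoint finite_label_pairs)
  moreover have "Suc p * (Suc p - 1) = p * (p - 1) + 2 * p"
    by (cases p) simp_all
  ultimately show ?case using Suc.IH by simp
qed

lemma pair_reduction_range: "g \<in> pair_reduction s ` Theta \<Longrightarrow> g z \<in> {-1, 1}"
  unfolding pair_reduction_def by (cases z) auto

lemma pair_reduction_separates_predictions:
  assumes "predictor p s t x = Some l" and "predictor p s t' x = Some l'" and "l \<noteq> l'"
  obtains z where "z \<in> {x} \<times> label_pairs p" and "pair_reduction s t z \<noteq> pair_reduction s t' z"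
proof -
  have l_wins: "s t x l' < s t x l" and l'_wins: "s t' x l < s t' x l'"
    using assms predictor_eq_SomeD by metis+
  have "l \<in> {1..p}" "l' \<in> {1..p}"
    using assms predictor_eq_SomeD by metis+
  with \<open>l \<noteq> l'\<close> have "(x, min l l', max l l') \<in> {x} \<times> label_pairs p"
    by (auto simp: label_pairs_def min_def max_def)
  moreover have "pair_reduction s t (x, min l l', max l l') \<noteq> pair_reduction s t' (x, min l l', max l l')"
    using l_wins l'_wins by (auto simp: pair_reduction_def min_def max_def)
  ultimately show ?thesis by (rule that)
qed

lemma restrict_pair_reduction_eq_imp_same_prediction:
  assumes "restrict (pair_reduction s t) (S \<times> label_pairs p)
      = restrict (pair_reduction s t') (S \<times> label_pairs p)"
    and "x \<in> S" and "predictor p s t x = Some l" and "predictor p s t' x = Some l'"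
  shows "l = l'"
proof (rule ccontr)
  assume "l \<noteq> l'"
  with assms(3,4) obtain z where z: "z \<in> {x} \<times> label_pairs p"
    and "pair_reduction s t z \<noteq> pair_reduction s t' z"
    by (rule pair_reduction_separates_predictions)
  moreover have "z \<in> S \<times> label_pairs p"
    using z \<open>x \<in> S\<close> by auto
  ultimately show False
    using fun_cong[OF assms(1), of z] by simp
qed

lemma restrict_image_subset_PiE:
  assumes "\<And>b z. b \<in> B \<Longrightarrow> b z \<in> V"
  shows "(\<lambda>b. restrict b T) ` B \<subseteq> T \<rightarrow>\<^sub>E V"
  using assms by auto

lemma finite_restrict_image:
  assumes "finite T" and "finite V" and "\<And>b z. b \<in> B \<Longrightarrow> b z \<in> V"
  shows "finite ((\<lambda>b. restrict b T) ` B)"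
proof (rule finite_subset)
  show "(\<lambda>b. restrict b T) ` B \<subseteq> T \<rightarrow>\<^sub>E V"
    using assms(3) by (rule restrict_image_subset_PiE)
  show "finite (T \<rightarrow>\<^sub>E V)"
    using assms(1,2) by (simp add: finite_PiE)
qed

lemma card_restrict_image_le_growth:
  assumes "finite V" and "\<And>b z. b \<in> B \<Longrightarrow> b z \<in> V"
    and "T \<subseteq> Z" and "finite T" and "card T = N"
  shows "card ((\<lambda>b. restrict b T) ` B) \<le> growth Z B N"
proof -
  let ?counts = "{card ((\<lambda>b. restrict b T') ` B) | T'. T' \<subseteq> Z \<and> finite T' \<and> card T' = N}"
  have "?counts \<subseteq> {..card V ^ N}"
  proof
    fix c assume "c \<in> ?counts"
    then obtain T' where T': "finite T'" "card T' = N" and c: "c = card ((\<lambda>b. restrict b T') ` B)"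
      by auto
    have "c \<le> card (T' \<rightarrow>\<^sub>E V)"
      unfolding c using T' assms(1,2)
      by (intro card_mono finite_PiE restrict_image_subset_PiE) auto
    also have "\<dots> = card V ^ N"
      using T' by (simp add: card_PiE)
    finally show "c \<in> {..card V ^ N}" by simp
  qed
  then have "finite ?counts" by (rule finite_subset) simp
  moreover have "card ((\<lambda>b. restrict b T) ` B) \<in> ?counts"
    using assms(3-5) by blast
  ultimately show ?thesis
    unfolding growth_def by (rule Max_ge)
qed

lemma natarajan_shattered_le_card_restrict_pair_reduction:
  assumes "natarajan_shattered p (predictor p s ` Theta) S"
  shows "2 ^ card S \<le> card ((\<lambda>g. restrict g (S \<times> label_pairs p)) ` (pair_reduction s ` Theta))"
proof -
  let ?T = "S \<times> label_pairs p"
  obtain f1 f2 where f_distinct: "\<And>x. x \<in> S \<Longrightarrow> f1 x \<noteq> f2 x"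
    and shattered: "\<forall>b. (\<forall>x\<in>S. b x \<in> {1::nat, 2}) \<longrightarrow>
           (\<exists>h\<in>predictor p s ` Theta. \<forall>x\<in>S. h x = Some (if b x = 1 then f1 x else f2 x))"
    using assms unfolding natarajan_shattered_def by blast
  have "finite S"
    using assms unfolding natarajan_shattered_def by blast
  define label where "label b x = (if b x = 1 then f1 x else f2 x)" for b :: "'a \<Rightarrow> nat" and x
  have "\<forall>b\<in>S \<rightarrow>\<^sub>E {1, 2}. \<exists>t\<in>Theta. \<forall>x\<in>S. predictor p s t x = Some (label b x)"
    using shattered by (fastforce simp: label_def PiE_iff)
  then obtain param where param: "\<And>b. b \<in> S \<rightarrow>\<^sub>E {1, 2} \<Longrightarrow> param b \<in> Theta"
    and param_predicts: "\<And>b x. b \<in> S \<rightarrow>\<^sub>E {1, 2} \<Longrightarrow> x \<in> S \<Longrightarrow>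
        predictor p s (param b) x = Some (label b x)"
    by metis
  define F where "F b = restrict (pair_reduction s (param b)) ?T" for b
  have "inj_on F (S \<rightarrow>\<^sub>E {1, 2})"
  proof (rule inj_onI)
    fix b b' assume b: "b \<in> S \<rightarrow>\<^sub>E {1, 2}" and b': "b' \<in> S \<rightarrow>\<^sub>E {1, 2}" and "F b = F b'"
    show "b = b'"
    proof (rule PiE_ext[OF b b'], rule ccontr)
      fix x assume "x \<in> S" and "b x \<noteq> b' x"
      with PiE_mem[OF b \<open>x \<in> S\<close>] PiE_mem[OF b' \<open>x \<in> S\<close>] f_distinct[OF \<open>x \<in> S\<close>]
      have "label b x \<noteq> label b' x"
        by (auto simp: label_def)
      moreover have "label b x = label b' x"
        using \<open>F b = F b'\<close> \<open>x \<in> S\<close> param_predicts[OF b \<open>x \<in> S\<close>] param_predicts[OF b' \<open>x \<in> S\<close>]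
        unfolding F_def by (rule restrict_pair_reduction_eq_imp_same_prediction)
      ultimately show False by simp
    qed
  qed
  then have "2 ^ card S = card (F ` (S \<rightarrow>\<^sub>E {1, 2}))"
    using \<open>finite S\<close> by (simp add: card_image card_PiE numeral_2_eq_2)
  also have "\<dots> \<le> card ((\<lambda>g. restrict g ?T) ` (pair_reduction s ` Theta))"
  proof (rule card_mono)
    show "finite ((\<lambda>g. restrict g ?T) ` (pair_reduction s ` Theta))"
      using \<open>finite S\<close> finite_label_pairs
      by (intro finite_restrict_image[of _ "{-1, 1}"] pair_reduction_range) auto
    show "F ` (S \<rightarrow>\<^sub>E {1, 2}) \<subseteq> (\<lambda>g. restrict g ?T) ` (pair_reduction s ` Theta)"
      using param by (auto simp: F_def)
  qed
  finally show ?thesis .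
qed

theorem mainTheorem15:
  fixes X :: "'x set" and Theta :: "'t set" and s :: "'t \<Rightarrow> 'x \<Rightarrow> nat \<Rightarrow> real"
    and S :: "'x set" and n p :: nat
  assumes "p \<ge> 2"
    and "S \<subseteq> X" and "finite S" and "card S = n"
    and "natarajan_shattered p (predictor p s ` Theta) S"
  shows "2 ^ n \<le> growth (pair_domain X p) (pair_reduction s ` Theta) (n * (p * (p - 1)) div 2)"
proof -
  let ?T = "S \<times> label_pairs p"
  have "n * (p * (p - 1)) = 2 * card ?T"
    using \<open>card S = n\<close> card_label_pairs[of p] by (simp add: card_cartesian_product)
  then have card_T: "card ?T = n * (p * (p - 1)) div 2"
    by simp
  have T_sub: "?T \<subseteq> pair_domain X p" and finite_T: "finite ?T"
    using \<open>S \<subseteq> X\<close> \<open>finite S\<close> by (auto simp: pair_domain_eq finite_label_pairs)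
  have "2 ^ n \<le> card ((\<lambda>g. restrict g ?T) ` (pair_reduction s ` Theta))"
    using natarajan_shattered_le_card_restrict_pair_reduction[OF assms(5)] \<open>card S = n\<close> by simp
  also have "\<dots> \<le> growth (pair_domain X p) (pair_reduction s ` Theta) (n * (p * (p - 1)) div 2)"
    by (rule card_restrict_image_le_growth[where V = "{-1, 1}", OF _ _ T_sub finite_T card_T])
      (simp, erule pair_reduction_range)
  finally show ?thesis .
qed

end
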